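(* Let $\alpha>0$ be real. Then for every polynomial $f$, $$\langle u_0(\alpha),f\rangle=\frac{2^{\alpha}\,\Gamma(\alpha+1/2)}{\sqrt{\pi}\,\Gamma(\alpha)^2}\int_0^{\infty}f(x)\,e^{-x}x^{\alpha-1}K_0(x)\,dx,$$ and $u_0(\alpha)$ is positive-definite (i.e. $\langle u_0(\alpha),g\rangle>0$ for every polynomial $g\not\equiv0$ that is nonnegative on $\mathbb{R}$); in particular $u_0(\alpha)$ is regular, so there exists a unique monic polynomial sequence orthogonal with respect to $u_0(\alpha)$.
   Context: $K_0$ is the modified Bessel function of the second kind of order $0$. Let $\mathcal{A}$ be the differential operator $\mathcal{A}f(x)=-x^2f''(x)-xf'(x)+x^2f(x)$ with iterates $\mathcal{A}^n$. For $\alpha>0$, $p_n(x;\alpha)=(-1)^n e^{x}x^{-\alpha}\mathcal{A}^n(e^{-x}x^{\alpha})$ is a polynomial of degree $n$ with leading coefficient $(-2)^n(\alpha+1/2)_n$, and $P_n(x;\alpha)=p_n(x;\alpha)/\big((-2)^n(\alpha+1/2)_n\big)$. $u_0(\alpha)$ is the linear functional on polynomials determined by $\langle u_0(\alpha),P_k(\cdot;\alpha)\rangle=\delta_{0,k}$, $k\ge0$ (its moments are $\langle u_0(\alpha),x^n\rangle=[(\alpha)_n]^2/(2^n(\alpha+1/2)_n)$). A form $v$ is regular if there is a polynomial sequence $\{Q_n\}$, $\deg Q_n=n$, with $\langle v,Q_nQ_m\rangle=k_n\delta_{n,m}$, $k_n\neq0$. *)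

theory Defs
  imports "HOL-Analysis.Analysis" "HOL-Computational_Algebra.Polynomial"
begin

definition bessel_K0 :: "real \<Rightarrow> real" where
  "bessel_K0 x = (LBINT t:{0..}. exp (- x * cosh t))"

definition u0_moment :: "real \<Rightarrow> nat \<Rightarrow> real" where
  "u0_moment \<alpha> n = (pochhammer \<alpha> n)^2 / (2^n * pochhammer (\<alpha> + 1/2) n)"

definition u0 :: "real \<Rightarrow> real poly \<Rightarrow> real" where
  "u0 \<alpha> f = (\<Sum>n\<le>degree f. coeff f n * u0_moment \<alpha> n)"

definition orthogonal_seq :: "(real poly \<Rightarrow> real) \<Rightarrow> (nat \<Rightarrow> real poly) \<Rightarrow> bool" where
  "orthogonal_seq v Q \<longleftrightarrow>
     (\<forall>n. degree (Q n) = n) \<and>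
     (\<exists>k. (\<forall>n. k n \<noteq> (0::real)) \<and>
          (\<forall>n m. v (Q n * Q m) = (if n = m then k n else 0)))"

definition regular_form :: "(real poly \<Rightarrow> real) \<Rightarrow> bool" where
  "regular_form v \<longleftrightarrow> (\<exists>Q. orthogonal_seq v Q)"

definition positive_definite_form :: "(real poly \<Rightarrow> real) \<Rightarrow> bool" where
  "positive_definite_form v \<longleftrightarrow>
     (\<forall>g. g \<noteq> 0 \<and> (\<forall>x. poly g x \<ge> 0) \<longrightarrow> v g > 0)"

end

theory Submission
  imports Defs "HOL-Real_Asymp.Real_Asymp"
begin

(* For any
   positive-definite linear functional v, Gram-Schmidt orthogonalisation of the
   monomials 1, x, x^2, ... produces a monic orthogonal polynomial sequence, and
   any other monic orthogonal sequence coincides with it.  Hence v is regular.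

   With K_0(x) = int_0^oo exp(-x cosh t) dt, Tonelli's theorem gives
     int_0^oo x^(s-1) e^(-x) K_0(x) dx = Gamma(s) int_0^oo (1 + cosh t)^(-s) dt
                                        = Gamma(s) 2^(-s) B(1/2, s),
   the last step by the substitution w = tanh(t/2)^2, which turns the integral
   into a Beta integral.  Via Gamma(a + k) = (a)_k Gamma(a) these are exactly the
   moments of u0 alpha (up to the stated constant), so the integral representation
   holds for monomials and, by linearity, for all polynomials.  Since K_0 > 0 the
   weight is positive on (0, oo), which makes u0 alpha positive definite. *)


section \<open>Positive-definite linear forms on polynomials\<close>

locale linear_poly_form =
  fixes v :: "real poly \<Rightarrow> real"
  assumes additive: "v (f + g) = v f + v g"
    and homogeneous: "v (smult c f) = c * v f"
begin

lemma map_zero [simp]: "v 0 = 0"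
  using homogeneous[of 0 0] by simp

lemma map_diff: "v (f - g) = v f - v g"
  using additive[of "f - g" g] by simp

lemma map_sum: "v (\<Sum>k\<in>A. F k) = (\<Sum>k\<in>A. v (F k))"
  by (induction A rule: infinite_finite_induct) (auto simp: additive)

(* If R is orthogonal to monic polynomials Q 0, ..., Q (n-1) with deg Q k = k, then R is
   orthogonal to every polynomial of degree below n: remove the top coefficient with
   Q (n-1) and induct. *)
lemma orthogonal_to_lower_degree:
  assumes "\<forall>k<n. degree (Q k) = k \<and> lead_coeff (Q k) = 1"
    and "\<forall>k<n. v (R * Q k) = 0"
    and "\<forall>i\<ge>n. coeff p i = 0"
  shows "v (R * p) = 0"
  using assms
proof (induction n arbitrary: p)
  case 0
  then have "p = 0" by (intro poly_eqI) auto
  then show ?case by simp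
next
  case (Suc n)
  define c where "c = coeff p n"
  have Qn: "degree (Q n) = n" "coeff (Q n) n = 1" using Suc.prems(1) by auto
  have "\<forall>i\<ge>n. coeff (p - smult c (Q n)) i = 0"
  proof (intro allI impI)
    fix i assume "n \<le> i"
    then consider "i = n" | "Suc n \<le> i" by linarith
    then show "coeff (p - smult c (Q n)) i = 0"
      by cases (use Suc.prems(3) Qn in \<open>auto simp: c_def coeff_eq_0\<close>)
  qed
  moreover have "\<forall>k<n. degree (Q k) = k \<and> lead_coeff (Q k) = 1" "\<forall>k<n. v (R * Q k) = 0"
    using Suc.prems(1,2) by (meson less_SucI)+
  ultimately have "v (R * (p - smult c (Q n))) = 0" using Suc.IH by blast
  then show ?case using Suc.prems(2) by (simp add: right_diff_distrib map_diff homogeneous)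
qed

lemma projection_orthogonal:
  fixes Q :: "nat \<Rightarrow> real poly"
  assumes orth: "\<And>j k. j < n \<Longrightarrow> k < n \<Longrightarrow> j \<noteq> k \<Longrightarrow> v (Q j * Q k) = 0"
    and nonzero: "\<And>k. k < n \<Longrightarrow> v (Q k * Q k) \<noteq> 0"
    and "k < n"
  shows "v ((p - (\<Sum>j<n. smult (v (p * Q j) / v (Q j * Q j)) (Q j))) * Q k) = 0"
proof -
  define c where "c j = v (p * Q j) / v (Q j * Q j)" for j
  have "(\<Sum>j<n. c j * v (Q j * Q k)) = c k * v (Q k * Q k) + (\<Sum>j\<in>{..<n} - {k}. c j * v (Q j * Q k))"
    using \<open>k < n\<close> by (intro sum.remove) auto
  also have "\<dots> = v (p * Q k)"
    using orth \<open>k < n\<close> nonzero[OF \<open>k < n\<close>] by (simp add: c_def)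
  finally show ?thesis
    by (simp add: c_def[symmetric] left_diff_distrib sum_distrib_right map_diff map_sum homogeneous)
qed

end

lemma positive_definite_square:
  assumes "positive_definite_form v" "q \<noteq> 0"
  shows "v (q * q) > 0"
  using assms unfolding positive_definite_form_def by (simp add: zero_le_mult_iff)

function gram_schmidt :: "(real poly \<Rightarrow> real) \<Rightarrow> nat \<Rightarrow> real poly" where
  "gram_schmidt v n = monom 1 n -
     (\<Sum>k<n. smult (v (monom 1 n * gram_schmidt v k) / v (gram_schmidt v k * gram_schmidt v k))
                   (gram_schmidt v k))"
  by auto
termination by (relation "Wellfounded.measure snd") auto

declare gram_schmidt.simps [simp del]

context linear_poly_form
begin

lemma gram_schmidt_props:
  assumes pd: "positive_definite_form v"
  shows "degree (gram_schmidt v n) = n \<and> lead_coeff (gram_schmidt v n) = 1 \<and>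
         (\<forall>k<n. v (gram_schmidt v n * gram_schmidt v k) = 0)"
proof (induction n rule: less_induct)
  case (less n)
  let ?Q = "gram_schmidt v"
  define S where "S = (\<Sum>k<n. smult (v (monom 1 n * ?Q k) / v (?Q k * ?Q k)) (?Q k))"
  have Qn: "?Q n = monom 1 n - S" unfolding S_def by (subst gram_schmidt.simps) simp
  have "coeff S i = 0" if "i \<ge> n" for i
    unfolding S_def coeff_sum using less that by (auto intro!: sum.neutral simp: coeff_eq_0)
  then have top: "coeff (?Q n) i = (if i = n then 1 else 0)" if "i \<ge> n" for i
    using that by (simp add: Qn coeff_monom)
  have deg: "degree (?Q n) = n"
    by (intro antisym degree_le le_degree) (use top in auto)
  have orth: "v (?Q n * ?Q k) = 0" if "k < n" for k
  proof -
    have "v (?Q j * ?Q k) = 0" if "j < n" "k < n" "j \<noteq> k" for j k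
    proof (cases "j < k")
      case True
      then have "v (?Q k * ?Q j) = 0" using less[of k] that by blast
      then show ?thesis by (simp add: mult.commute)
    next
      case False
      then show ?thesis using less[of j] that by auto
    qed
    moreover have "v (?Q k * ?Q k) \<noteq> 0" if "k < n" for k
      using less[OF that] positive_definite_square[OF pd, of "?Q k"] by force
    ultimately show ?thesis
      using projection_orthogonal[of n ?Q k "monom 1 n"] \<open>k < n\<close> by (simp add: Qn S_def)
  qed
  show ?case using deg top orth by simp
qed

theorem positive_definite_monic_ops:
  assumes pd: "positive_definite_form v"
  shows "regular_form v \<and> (\<exists>!Q. orthogonal_seq v Q \<and> (\<forall>n. lead_coeff (Q n) = 1))"
proof -
  let ?Q = "gram_schmidt v"
  note gs = gram_schmidt_props[OF pd]
  have norm_pos: "v (?Q n * ?Q n) > 0" for n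
    using gs[of n] positive_definite_square[OF pd, of "?Q n"] by force
  have os: "orthogonal_seq v ?Q"
    unfolding orthogonal_seq_def
  proof (intro conjI exI[of _ "\<lambda>n. v (?Q n * ?Q n)"] allI)
    show "degree (?Q n) = n" for n using gs by blast
    show "v (?Q n * ?Q n) \<noteq> 0" for n using norm_pos[of n] by simp
    show "v (?Q n * ?Q m) = (if n = m then v (?Q n * ?Q n) else 0)" for n m
      using gs[of n] gs[of m] by (cases n m rule: linorder_cases) (auto simp: mult.commute)
  qed
  have unique: "R = ?Q" if R: "orthogonal_seq v R" "\<forall>n. lead_coeff (R n) = 1" for R
  proof
    fix n
    from R(1) obtain kk where degR: "\<forall>n. degree (R n) = n"
      and orthR: "\<forall>n m. v (R n * R m) = (if n = m then kk n else 0)"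
      unfolding orthogonal_seq_def by blast
    define D where "D = ?Q n - R n"
    (* D has degree below n, so it is orthogonal to both Q n and R n, hence to itself. *)
    have lower: "\<forall>i\<ge>n. coeff D i = 0"
      using gs[of n] degR R(2) by (auto simp: D_def coeff_eq_0 le_less)
    have "v (?Q n * D) = 0"
      using gs lower by (intro orthogonal_to_lower_degree[of n ?Q]) blast+
    moreover have "v (R n * D) = 0"
      by (rule orthogonal_to_lower_degree[of n R]) (use degR R(2) orthR lower in auto)
    ultimately have "v (D * D) = 0" by (simp add: D_def left_diff_distrib map_diff)
    then have "D = 0" using positive_definite_square[OF pd, of D] by fastforce
    then show "R n = ?Q n" by (simp add: D_def)
  qed
  show ?thesis unfolding regular_form_def using os gs unique by blast
qed

end


lemma u0_eq_sum:
  assumes "degree f \<le> N"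
  shows "u0 \<alpha> f = (\<Sum>n\<le>N. coeff f n * u0_moment \<alpha> n)"
  unfolding u0_def
  by (rule sum.mono_neutral_left) (use assms in \<open>auto simp: coeff_eq_0\<close>)

lemma linear_poly_form_u0: "linear_poly_form (u0 \<alpha>)"
proof
  fix f g :: "real poly" and c :: real
  let ?N = "max (degree f) (degree g)"
  have "degree (f + g) \<le> ?N" by (rule degree_add_le) auto
  then show "u0 \<alpha> (f + g) = u0 \<alpha> f + u0 \<alpha> g"
    by (simp add: u0_eq_sum[of _ ?N] u0_eq_sum[of f ?N] u0_eq_sum[of g ?N] sum.distrib algebra_simps)
  show "u0 \<alpha> (smult c f) = c * u0 \<alpha> f"
    by (simp add: u0_eq_sum[of _ "degree f"] u0_def sum_distrib_left mult_ac)
qed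


section \<open>The Bessel function K_0\<close>

lemma cosh_measurable [measurable]: "(cosh :: real \<Rightarrow> real) \<in> borel_measurable borel"
  by (rule borel_measurable_continuous_onI) (intro continuous_intros)

lemma bessel_K0_measurable [measurable]: "bessel_K0 \<in> borel_measurable borel"
  unfolding bessel_K0_def[abs_def] set_lebesgue_integral_def by measurable

lemma bessel_K0_nonneg: "bessel_K0 x \<ge> 0"
  unfolding bessel_K0_def set_lebesgue_integral_def
  by (rule Bochner_Integration.integral_nonneg) (auto simp: indicator_def)

(* t <= cosh t on [0, oo); it lets exp (-x t) dominate the integrand defining K_0. *)
lemma le_cosh:
  fixes t :: real
  assumes "0 \<le> t"
  shows "t \<le> cosh t"
proof -
  have "0 \<le> (t - 1)\<^sup>2" by simp
  then have "2 * t \<le> 1 + t + t\<^sup>2 / 2" by (simp add: power2_diff)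
  also have "\<dots> \<le> exp t" using exp_lower_Taylor_quadratic[OF assms] .
  finally have "2 * t \<le> exp t" .
  moreover have "0 < exp (-t)" by simp
  ultimately have "t * 2 \<le> exp t + exp (-t)" by linarith
  then show ?thesis by (simp add: cosh_def)
qed

lemma integrable_if_nn_integral_finite:
  fixes f :: "'a \<Rightarrow> real"
  assumes "f \<in> borel_measurable M" "\<And>x. 0 \<le> f x" "(\<integral>\<^sup>+x. ennreal (f x) \<partial>M) < \<infinity>"
  shows "integrable M f" "(\<integral>\<^sup>+x. ennreal (f x) \<partial>M) = ennreal (integral\<^sup>L M f)"
proof -
  show "integrable M f" by (rule integrableI_nonneg) (use assms in auto)
  then show "(\<integral>\<^sup>+x. ennreal (f x) \<partial>M) = ennreal (integral\<^sup>L M f)"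
    by (rule nn_integral_eq_integral) (use assms in auto)
qed

lemma bessel_K0_integrable:
  fixes x :: real
  assumes x: "x > 0"
  shows "integrable lborel (\<lambda>t. indicator {0..} t * exp (- x * cosh t))"
    and "ennreal (bessel_K0 x) = (\<integral>\<^sup>+t. ennreal (indicator {0..} t * exp (- x * cosh t)) \<partial>lborel)"
proof -
  have "(\<integral>\<^sup>+t. ennreal (indicator {0..} t * exp (- x * cosh t)) \<partial>lborel)
      \<le> (\<integral>\<^sup>+t. ennreal (indicator {0..} t * exp (- x * t)) \<partial>lborel)"
    using le_cosh x by (intro nn_integral_mono) (auto simp: indicator_def intro!: ennreal_leI)
  also have "\<dots> = ennreal (exp (- x * 0) / x)"
    using nn_integral_has_integral_lebesgue[OF _ has_integral_exp_minus_to_infinity[OF x, of 0]]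
    by simp
  finally have "(\<integral>\<^sup>+t. ennreal (indicator {0..} t * exp (- x * cosh t)) \<partial>lborel) < \<infinity>"
    by (simp add: le_less_trans)
  note finite = integrable_if_nn_integral_finite[OF _ _ this]
  show "integrable lborel (\<lambda>t. indicator {0..} t * exp (- x * cosh t))"
    by (rule finite) auto
  show "ennreal (bessel_K0 x) = (\<integral>\<^sup>+t. ennreal (indicator {0..} t * exp (- x * cosh t)) \<partial>lborel)"
    using finite(2) by (simp add: bessel_K0_def set_lebesgue_integral_def)
qed

lemma integral_pos_if_pos_on_interval:
  fixes \<phi> :: "real \<Rightarrow> real"
  assumes int: "integrable lborel \<phi>" and nonneg: "\<And>x. 0 \<le> \<phi> x"
    and "a < b" "countable Z" and pos: "\<And>x. x \<in> {a<..<b} - Z \<Longrightarrow> \<phi> x > 0"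
  shows "integral\<^sup>L lborel \<phi> > 0"
proof (rule ccontr)
  assume "\<not> integral\<^sup>L lborel \<phi> > 0"
  moreover have "integral\<^sup>L lborel \<phi> \<ge> 0" using nonneg by simp
  ultimately have "integral\<^sup>L lborel \<phi> = 0" by simp
  then have "AE x in lborel. \<phi> x = 0"
    using integral_nonneg_eq_0_iff_AE[OF int] nonneg by simp
  moreover have "AE x in lborel. x \<notin> Z"
    by (rule AE_discrete_difference) (use \<open>countable Z\<close> in auto)
  ultimately have "AE x in lborel. x \<notin> {a<..<b}"
    by eventually_elim (use pos in fastforce)
  then have "emeasure lborel {a<..<b} = 0"
    by (subst (asm) AE_iff_measurable[of "{a<..<b}"]) auto
  then show False using \<open>a < b\<close> by simp
qed

lemma bessel_K0_pos:
  assumes "x > 0"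
  shows "bessel_K0 x > 0"
proof -
  have "bessel_K0 x = integral\<^sup>L lborel (\<lambda>t. indicator {0..} t * exp (- x * cosh t))"
    by (simp add: bessel_K0_def set_lebesgue_integral_def)
  also have "\<dots> > 0"
    by (rule integral_pos_if_pos_on_interval[of _ 0 1 "{}"])
      (use bessel_K0_integrable(1)[OF assms] in auto)
  finally show ?thesis .
qed


section \<open>Moments of the weight\<close>

lemma nn_integral_gamma_scaled:
  fixes a s :: real
  assumes a: "a > 0" and s: "s > 0"
  shows "(\<integral>\<^sup>+x. ennreal (indicator {0<..} x * (x powr (s-1) * exp (-(a*x)))) \<partial>lborel)
         = ennreal (a powr (-s) * Gamma s)"
proof -
  define F where "F y = ennreal (indicator {0<..} y * (y powr (s-1) * exp (-y)))" for y :: real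
  have F_meas: "F \<in> borel_measurable borel" unfolding F_def by measurable
  have Gamma: "integral\<^sup>N lborel F = ennreal (Gamma s)"
    unfolding Gamma_conv_nn_integral_real[OF s] F_def
    by (intro nn_integral_cong) (auto simp: indicator_def exp_minus field_simps)
  have affine: "integral\<^sup>N lborel F = ennreal a * (\<integral>\<^sup>+x. F (a * x) \<partial>lborel)"
    using nn_integral_real_affine[OF F_meas, of a 0] a by simp
  have scale: "ennreal (indicator {0<..} x * (x powr (s-1) * exp (-(a*x))))
             = ennreal (a powr (-s)) * (ennreal a * F (a * x))" for x
  proof (cases "x > 0")
    case True
    have "a powr (-s) * (a * (a * x) powr (s - 1)) = x powr (s - 1)"
      using a True by (simp add: powr_mult powr_diff powr_minus field_simps)
    then show ?thesis
      using True a by (simp add: F_def ennreal_mult'[symmetric] mult_ac)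
  qed (use a in \<open>simp add: F_def indicator_def zero_less_mult_iff\<close>)
  have "(\<integral>\<^sup>+x. ennreal (indicator {0<..} x * (x powr (s-1) * exp (-(a*x)))) \<partial>lborel)
     = ennreal (a powr (-s)) * (ennreal a * (\<integral>\<^sup>+x. F (a * x) \<partial>lborel))"
    unfolding scale using F_meas by (simp add: nn_integral_cmult)
  also have "\<dots> = ennreal (a powr (-s) * Gamma s)"
    using affine Gamma by (simp add: ennreal_mult')
  finally show ?thesis .
qed

(* The substitution w = tanh (t/2)^2, i.e. t = ln (1 + sqrt w) - ln (1 - sqrt w),
   maps (0, 1) onto (0, oo); its effect on cosh and its derivative. *)
lemma tanh_half_substitution:
  fixes w :: real
  assumes w: "0 < w" "w < 1"
  shows "cosh (ln (1 + sqrt w) - ln (1 - sqrt w)) = (1 + w) / (1 - w)"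
    and "((\<lambda>w. ln (1 + sqrt w) - ln (1 - sqrt w)) has_real_derivative 1 / (sqrt w * (1 - w))) (at w)"
proof -
  define r where "r = sqrt w"
  have r: "0 < r" "r < 1" "r * r = w" using w by (auto simp: r_def)
  have "1 - r * r > 0" using r(3) w(2) by simp
  have "cosh (ln (1 + r) - ln (1 - r)) = cosh (ln ((1 + r) / (1 - r)))"
    using r by (simp add: ln_div)
  also have "\<dots> = ((1 + r) / (1 - r) + (1 - r) / (1 + r)) / 2"
    using r by (simp add: cosh_ln_real)
  also have "\<dots> = (1 + w) / (1 - w)"
    using r \<open>1 - r * r > 0\<close> by (simp add: field_simps flip: r(3))
  finally show "cosh (ln (1 + sqrt w) - ln (1 - sqrt w)) = (1 + w) / (1 - w)"
    by (simp add: r_def)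
  have "0 < 1 - sqrt w" using r by (simp add: r_def)
  then have "((\<lambda>w. ln (1 + sqrt w) - ln (1 - sqrt w)) has_real_derivative
          inverse (sqrt w) / (2 + sqrt w * 2) + inverse (sqrt w) / (2 - sqrt w * 2)) (at w)"
    using w by (auto intro!: derivative_eq_intros simp: add_pos_nonneg)
  also have "inverse (sqrt w) / (2 + sqrt w * 2) + inverse (sqrt w) / (2 - sqrt w * 2)
           = 1 / (sqrt w * (1 - w))"
  proof -
    have "inverse r / (2 + r * 2) + inverse r / (2 - r * 2) = 1 / (r * ((1 - r) * (1 + r)))"
      using r(1,2) by (simp add: divide_simps) (simp add: algebra_simps)
    also have "(1 - r) * (1 + r) = 1 - w" using r(3) by (simp add: algebra_simps)
    finally show ?thesis by (simp add: r_def)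
  qed
  finally show "((\<lambda>w. ln (1 + sqrt w) - ln (1 - sqrt w)) has_real_derivative 1 / (sqrt w * (1 - w))) (at w)" .
qed

lemma tanh_half_substituted_integrand:
  fixes w s :: real
  assumes w: "0 < w" "w < 1"
  shows "(1 + cosh (ln (1 + sqrt w) - ln (1 - sqrt w))) powr (-s) * (1 / (sqrt w * (1 - w)))
         = 2 powr (-s) * (w powr (1/2 - 1) * (1 - w) powr (s - 1))"
proof -
  have "1 + cosh (ln (1 + sqrt w) - ln (1 - sqrt w)) = 2 / (1 - w)"
    using tanh_half_substitution(1)[OF w] w by (simp add: field_simps)
  then have "(1 + cosh (ln (1 + sqrt w) - ln (1 - sqrt w))) powr (-s) = (2 / (1 - w)) powr (-s)"
    by simp
  also have "\<dots> = 2 powr (-s) * (1 - w) powr s"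
    using w by (simp add: powr_divide powr_minus field_simps)
  finally have "(1 + cosh (ln (1 + sqrt w) - ln (1 - sqrt w))) powr (-s) = 2 powr (-s) * (1 - w) powr s" .
  moreover have "1 / (sqrt w * (1 - w)) = w powr (1/2 - 1) * (1 - w) powr (-1)"
    using w by (simp add: powr_minus powr_half_sqrt[symmetric] powr_diff field_simps)
  moreover have "(1 - w) powr (s - 1) = (1 - w) powr s / (1 - w)"
    using w by (simp add: powr_diff)
  ultimately show ?thesis using w by (simp add: powr_add[symmetric] mult_ac)
qed

lemma tanh_half_substitution_limits:
  "((ereal \<circ> (\<lambda>w. ln (1 + sqrt w) - ln (1 - sqrt w)) \<circ> real_of_ereal) \<longlongrightarrow> 0) (at_right 0)"
  "((ereal \<circ> (\<lambda>w. ln (1 + sqrt w) - ln (1 - sqrt w)) \<circ> real_of_ereal) \<longlongrightarrow> \<infinity>) (at_left 1)"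
proof -
  have "((\<lambda>w::real. ln (1 + sqrt w) - ln (1 - sqrt w)) \<longlongrightarrow> 0) (at_right 0)" by real_asymp
  then show "((ereal \<circ> (\<lambda>w. ln (1 + sqrt w) - ln (1 - sqrt w)) \<circ> real_of_ereal) \<longlongrightarrow> 0) (at_right 0)"
    unfolding zero_ereal_def by (simp add: ereal_tendsto_simps1 ereal_tendsto_simps2 flip: comp_assoc)
  have "filterlim (\<lambda>w::real. ln (1 + sqrt w) - ln (1 - sqrt w)) at_top (at_left 1)" by real_asymp
  then show "((ereal \<circ> (\<lambda>w. ln (1 + sqrt w) - ln (1 - sqrt w)) \<circ> real_of_ereal) \<longlongrightarrow> \<infinity>) (at_left 1)"
    unfolding one_ereal_def by (simp add: ereal_tendsto_simps1 ereal_tendsto_simps2 flip: comp_assoc)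
qed

lemma cosh_beta_integral:
  fixes s :: real
  assumes s: "s > 0"
  shows "set_integrable lborel {0<..} (\<lambda>t. (1 + cosh t) powr (-s))"
    and "(LBINT t:{0<..}. (1 + cosh t) powr (-s)) = 2 powr (-s) * Beta (1/2) s"
proof -
  define g where "g w = ln (1 + sqrt w) - ln (1 - sqrt w)" for w :: real
  define g' where "g' w = 1 / (sqrt w * (1 - w))" for w :: real
  define f where "f t = (1 + cosh t) powr (-s)" for t :: real
  define beta where "beta w = w powr (1/2 - 1) * (1 - w) powr (s - 1)" for w :: real
  have substituted: "f (g w) * g' w = 2 powr (-s) * beta w" if "0 < w" "w < 1" for w
    using tanh_half_substituted_integrand[OF that] by (simp add: f_def g_def g'_def beta_def)
  have beta_int: "set_integrable lborel {0<..<1} beta"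
    unfolding beta_def by (rule set_integrable_subset[OF integrable_Beta]) (use s in auto)
  have int_substituted: "set_integrable lborel (einterval 0 1) (\<lambda>w. f (g w) * g' w)"
  proof -
    have "set_integrable lborel {0<..<1} (\<lambda>w. 2 powr (-s) * beta w)"
      by (rule set_integrable_mult_right[OF beta_int])
    then show ?thesis
      by (rule set_integrable_cong[THEN iffD1, rotated -1])
        (auto simp: substituted zero_ereal_def one_ereal_def einterval_eq_Icc)
  qed
  have g_deriv: "\<And>w. 0 < ereal w \<Longrightarrow> ereal w < 1 \<Longrightarrow> DERIV g w :> g' w"
    unfolding g_def[abs_def] g'_def using tanh_half_substitution(2) by simp
  have "isCont f t" for t
  proof -
    have "1 + cosh t > 0" using cosh_real_pos[of t] by linarith
    then show ?thesis unfolding f_def by (intro continuous_intros) auto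
  qed
  then have f_cont: "\<And>w. 0 < ereal w \<Longrightarrow> ereal w < 1 \<Longrightarrow> isCont f (g w)" by blast
  have g'_cont: "\<And>w. 0 < ereal w \<Longrightarrow> ereal w < 1 \<Longrightarrow> isCont g' w"
    unfolding g'_def by (intro continuous_intros) auto
  have f_nonneg: "\<And>w. 0 < ereal w \<Longrightarrow> ereal w < 1 \<Longrightarrow> 0 \<le> f (g w)"
    by (simp add: f_def)
  have g'_nonneg: "\<And>w. 0 \<le> ereal w \<Longrightarrow> ereal w \<le> 1 \<Longrightarrow> 0 \<le> g' w"
    by (auto simp: g'_def)
  note g_at_0 = tanh_half_substitution_limits(1)[folded g_def[abs_def]]
  note g_at_1 = tanh_half_substitution_limits(2)[folded g_def[abs_def]]
  have "(0::ereal) < 1" by simp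
  note subst = interval_integral_substitution_nonneg[OF this g_deriv f_cont g'_cont f_nonneg g'_nonneg
      g_at_0 g_at_1 int_substituted]
  show "set_integrable lborel {0<..} (\<lambda>t. (1 + cosh t) powr (-s))"
    using subst(1) by (simp add: f_def zero_ereal_def einterval_eq_Ici)
  have "(LBINT t:{0<..}. (1 + cosh t) powr (-s)) = (LBINT x=0..\<infinity>. f x)"
    by (simp add: interval_lebesgue_integral_def zero_ereal_def einterval_eq_Ici f_def)
  also have "\<dots> = (LBINT w=0..1. f (g w) * g' w)"
    by (rule subst(2))
  also have "\<dots> = (LBINT w:{0<..<1}. f (g w) * g' w)"
    by (simp add: interval_lebesgue_integral_def zero_ereal_def one_ereal_def einterval_eq_Icc)
  also have "\<dots> = (LBINT w:{0<..<1}. 2 powr (-s) * beta w)"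
    by (rule set_lebesgue_integral_cong) (simp_all add: substituted)
  also have "\<dots> = 2 powr (-s) * (LBINT w:{0<..<1}. beta w)"
    by (rule set_integral_mult_right)
  also have "(LBINT w:{0<..<1}. beta w) = Beta (1/2) s"
  proof -
    have "(beta has_integral Beta (1/2) s) {0<..<1}"
      using has_integral_Beta_real[of "1/2" s] s unfolding beta_def[abs_def]
      by (simp add: has_integral_Icc_iff_Ioo)
    then show ?thesis using set_borel_integral_eq_integral(2)[OF beta_int] by (simp add: integral_unique)
  qed
  finally show "(LBINT t:{0<..}. (1 + cosh t) powr (-s)) = 2 powr (-s) * Beta (1/2) s" .
qed

(* Insert the integral
   defining K_0, exchange the order of integration (Tonelli), integrate out x with
   nn_integral_gamma_scaled and finish with cosh_beta_integral. *)
lemma bessel_K0_mellin_nn: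
  fixes s :: real
  assumes s: "s > 0"
  shows "(\<integral>\<^sup>+x. ennreal (indicator {0<..} x * (x powr (s-1) * exp (-x) * bessel_K0 x)) \<partial>lborel)
         = ennreal (Gamma s * 2 powr (-s) * Beta (1/2) s)"
proof -
  define H where "H x t = ennreal (indicator {0<..} x * indicator {0..} t *
                     (x powr (s-1) * exp (-((1 + cosh t) * x))))" for x t :: real
  have H_meas: "case_prod H \<in> borel_measurable (lborel \<Otimes>\<^sub>M lborel)"
    unfolding H_def by measurable
  have inner_t: "ennreal (indicator {0<..} x * (x powr (s-1) * exp (-x) * bessel_K0 x))
                 = (\<integral>\<^sup>+t. H x t \<partial>lborel)" for x :: real
  proof (cases "x > 0")
    case True
    define c where "c = x powr (s-1) * exp (-x)"
    have "c \<ge> 0" by (simp add: c_def)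
    have "ennreal (indicator {0<..} x * (x powr (s-1) * exp (-x) * bessel_K0 x))
        = ennreal c * (\<integral>\<^sup>+t. ennreal (indicator {0..} t * exp (- x * cosh t)) \<partial>lborel)"
      using True \<open>c \<ge> 0\<close> bessel_K0_integrable(2)[OF True]
      by (simp add: c_def ennreal_mult' mult.assoc)
    also have "\<dots> = (\<integral>\<^sup>+t. ennreal (c * (indicator {0..} t * exp (- x * cosh t))) \<partial>lborel)"
      using \<open>c \<ge> 0\<close> by (simp add: nn_integral_cmult ennreal_mult)
    also have "\<dots> = (\<integral>\<^sup>+t. H x t \<partial>lborel)"
      using True by (intro nn_integral_cong) (simp add: H_def c_def algebra_simps flip: exp_add)
    finally show ?thesis .
  qed (simp add: H_def)
  have inner_x: "(\<integral>\<^sup>+x. H x t \<partial>lborel)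
                 = ennreal (Gamma s) * ennreal (indicator {0<..} t * (1 + cosh t) powr (-s))"
    if "t \<noteq> 0" for t :: real
  proof (cases "t > 0")
    case True
    have "1 + cosh t > 0" using cosh_real_pos[of t] by linarith
    have "(\<integral>\<^sup>+x. H x t \<partial>lborel)
        = (\<integral>\<^sup>+x. ennreal (indicator {0<..} x * (x powr (s-1) * exp (-((1 + cosh t) * x)))) \<partial>lborel)"
      using True by (intro nn_integral_cong) (simp add: H_def)
    also have "\<dots> = ennreal ((1 + cosh t) powr (-s) * Gamma s)"
      by (rule nn_integral_gamma_scaled[OF \<open>1 + cosh t > 0\<close> s])
    finally show ?thesis
      using True s by (simp add: ennreal_mult'[symmetric] mult.commute)
  qed (use that in \<open>simp add: H_def\<close>)
  have cosh_nn: "(\<integral>\<^sup>+t. ennreal (indicator {0<..} t * (1 + cosh t) powr (-s)) \<partial>lborel)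
                 = ennreal (2 powr (-s) * Beta (1/2) s)"
    using cosh_beta_integral[OF s] nn_integral_eq_integral[of lborel "\<lambda>t. indicator {0<..} t * (1 + cosh t) powr (-s)"]
    by (simp add: set_integrable_def set_lebesgue_integral_def)
  have "(\<integral>\<^sup>+x. ennreal (indicator {0<..} x * (x powr (s-1) * exp (-x) * bessel_K0 x)) \<partial>lborel)
      = (\<integral>\<^sup>+x. (\<integral>\<^sup>+t. H x t \<partial>lborel) \<partial>lborel)"
    by (simp add: inner_t)
  also have "\<dots> = (\<integral>\<^sup>+t. (\<integral>\<^sup>+x. H x t \<partial>lborel) \<partial>lborel)"
    by (rule lborel_pair.Fubini'[symmetric, OF H_meas])
  also have "\<dots> = (\<integral>\<^sup>+t. ennreal (Gamma s) * ennreal (indicator {0<..} t * (1 + cosh t) powr (-s)) \<partial>lborel)"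
    by (intro nn_integral_cong_AE) (use AE_lborel_singleton[of 0] inner_x in \<open>auto elim: eventually_mono\<close>)
  also have "\<dots> = ennreal (Gamma s) * ennreal (2 powr (-s) * Beta (1/2) s)"
    by (simp add: nn_integral_cmult cosh_nn)
  also have "\<dots> = ennreal (Gamma s * 2 powr (-s) * Beta (1/2) s)"
    using s by (simp add: ennreal_mult'[symmetric] mult.assoc)
  finally show ?thesis .
qed

lemma bessel_K0_mellin:
  fixes s :: real
  assumes s: "s > 0"
  shows "set_integrable lborel {0<..} (\<lambda>x. x powr (s-1) * exp (-x) * bessel_K0 x)"
    and "(LBINT x:{0<..}. x powr (s-1) * exp (-x) * bessel_K0 x) = Gamma s * 2 powr (-s) * Beta (1/2) s"
proof -
  define \<phi> where "\<phi> x = indicator {0<..} x * (x powr (s-1) * exp (-x) * bessel_K0 x)" for x :: real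
  have nonneg: "0 \<le> \<phi> x" for x
    unfolding \<phi>_def using bessel_K0_nonneg[of x] by (simp add: indicator_def)
  have value_nonneg: "0 \<le> Gamma s * 2 powr (-s) * Beta (1/2) s"
    using s by (simp add: Beta_def)
  have "\<phi> \<in> borel_measurable lborel" unfolding \<phi>_def by measurable
  note finite = integrable_if_nn_integral_finite[OF this nonneg]
  have "integrable lborel \<phi>"
    by (rule finite(1)) (simp add: \<phi>_def bessel_K0_mellin_nn[OF s])
  then show "set_integrable lborel {0<..} (\<lambda>x. x powr (s-1) * exp (-x) * bessel_K0 x)"
    by (simp add: set_integrable_def \<phi>_def[abs_def])
  have "ennreal (integral\<^sup>L lborel \<phi>) = ennreal (Gamma s * 2 powr (-s) * Beta (1/2) s)"
    by (subst finite(2)[symmetric]) (simp_all add: \<phi>_def[abs_def] bessel_K0_mellin_nn[OF s])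
  then show "(LBINT x:{0<..}. x powr (s-1) * exp (-x) * bessel_K0 x) = Gamma s * 2 powr (-s) * Beta (1/2) s"
    using value_nonneg nonneg by (simp add: set_lebesgue_integral_def \<phi>_def[abs_def])
qed


section \<open>The integral representation of u0 and its positivity\<close>

definition u0_weight_constant :: "real \<Rightarrow> real" where
  "u0_weight_constant \<alpha> = 2 powr \<alpha> * Gamma (\<alpha> + 1/2) / (sqrt pi * (Gamma \<alpha>)^2)"

lemma u0_weight_constant_pos:
  assumes "\<alpha> > 0"
  shows "u0_weight_constant \<alpha> > 0"
proof -
  have "Gamma \<alpha> \<noteq> 0" using Gamma_real_pos[OF assms] by simp
  then show ?thesis
    using assms unfolding u0_weight_constant_def by (intro divide_pos_pos mult_pos_pos) simp_all
qed

lemma weighted_monomial_integral: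
  fixes \<alpha> :: real
  assumes "\<alpha> > 0"
  shows "set_integrable lborel {0<..} (\<lambda>x. x^k * exp (-x) * x powr (\<alpha>-1) * bessel_K0 x)"
    and "(LBINT x:{0<..}. x^k * exp (-x) * x powr (\<alpha>-1) * bessel_K0 x)
           = Gamma (\<alpha> + k) * 2 powr (-(\<alpha> + k)) * Beta (1/2) (\<alpha> + k)"
proof -
  have s: "\<alpha> + k > 0" using assms by simp
  have eq: "x^k * exp (-x) * x powr (\<alpha>-1) * bessel_K0 x = x powr ((\<alpha> + k) - 1) * exp (-x) * bessel_K0 x"
    if "x \<in> {0<..}" for x :: real
    using that by (simp add: powr_add powr_realpow[symmetric] powr_diff mult_ac)
  have "set_integrable lborel {0<..} (\<lambda>x. x^k * exp (-x) * x powr (\<alpha>-1) * bessel_K0 x)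
      = set_integrable lborel {0<..} (\<lambda>x. x powr ((\<alpha> + k) - 1) * exp (-x) * bessel_K0 x)"
    by (rule set_integrable_cong) (simp_all add: eq)
  then show "set_integrable lborel {0<..} (\<lambda>x. x^k * exp (-x) * x powr (\<alpha>-1) * bessel_K0 x)"
    using bessel_K0_mellin(1)[OF s] by simp
  have "(LBINT x:{0<..}. x^k * exp (-x) * x powr (\<alpha>-1) * bessel_K0 x)
      = (LBINT x:{0<..}. x powr ((\<alpha> + k) - 1) * exp (-x) * bessel_K0 x)"
    by (rule set_lebesgue_integral_cong) (simp_all add: eq)
  then show "(LBINT x:{0<..}. x^k * exp (-x) * x powr (\<alpha>-1) * bessel_K0 x)
           = Gamma (\<alpha> + k) * 2 powr (-(\<alpha> + k)) * Beta (1/2) (\<alpha> + k)"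
    using bessel_K0_mellin(2)[OF s] by simp
qed

(* The moments of u0 alpha are the weighted moments times the normalising constant;
   this is Gamma (a + k) = (a)_k Gamma a together with B(1/2, s) = sqrt pi Gamma s / Gamma (s + 1/2). *)
lemma u0_moment_eq_weighted_moment:
  fixes \<alpha> :: real
  assumes a: "\<alpha> > 0"
  shows "u0_moment \<alpha> k
         = u0_weight_constant \<alpha> * (Gamma (\<alpha> + k) * 2 powr (-(\<alpha> + k)) * Beta (1/2) (\<alpha> + k))"
proof -
  have n1: "\<alpha> \<notin> \<int>\<^sub>\<le>\<^sub>0" and n2: "\<alpha> + 1/2 \<notin> \<int>\<^sub>\<le>\<^sub>0"
    using a nonpos_Ints_nonpos by fastforce+
  define A where "A = Gamma \<alpha>"
  define B where "B = Gamma (\<alpha> + 1/2)"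
  define G where "G = Gamma (\<alpha> + k)"
  define H where "H = Gamma (\<alpha> + 1/2 + k)"
  have pos: "A > 0" "B > 0" "G > 0" "H > 0" using a by (simp_all add: A_def B_def G_def H_def)
  have p1: "pochhammer \<alpha> k = G / A" unfolding G_def A_def by (rule pochhammer_Gamma[OF n1])
  have p2: "pochhammer (\<alpha> + 1/2) k = H / B" unfolding H_def B_def by (rule pochhammer_Gamma[OF n2])
  have beta: "Beta (1/2) (\<alpha> + k) = sqrt pi * G / H"
    by (simp add: Beta_def Gamma_one_half_real G_def H_def add_ac)
  have "2 powr (\<alpha> + k) = 2 powr \<alpha> * (2::real) ^ k" by (simp add: powr_add powr_realpow)
  then have pw: "2 powr (-(\<alpha> + k)) = inverse (2 powr \<alpha> * 2 ^ k)" by (simp only: powr_minus)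
  show ?thesis
    unfolding u0_moment_def u0_weight_constant_def p1 p2 beta pw
      A_def[symmetric] B_def[symmetric] G_def[symmetric]
    using pos by (simp add: field_simps power2_eq_square)
qed

lemma set_integrable_sum:
  fixes F :: "'i \<Rightarrow> real \<Rightarrow> real"
  assumes "\<And>k. k \<in> K \<Longrightarrow> set_integrable lborel A (F k)"
  shows "set_integrable lborel A (\<lambda>x. \<Sum>k\<in>K. F k x)"
    and "(LBINT x:A. (\<Sum>k\<in>K. F k x)) = (\<Sum>k\<in>K. LBINT x:A. F k x)"
  using assms unfolding set_integrable_def set_lebesgue_integral_def
  by (simp_all add: sum_distrib_left Bochner_Integration.integral_sum)

lemma u0_integral_representation:
  fixes \<alpha> :: real and f :: "real poly"
  assumes a: "\<alpha> > 0"
  shows "set_integrable lborel {0<..} (\<lambda>x. poly f x * exp (- x) * x powr (\<alpha> - 1) * bessel_K0 x)"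
    and "u0 \<alpha> f = u0_weight_constant \<alpha> *
           (LBINT x:{0<..}. poly f x * exp (- x) * x powr (\<alpha> - 1) * bessel_K0 x)"
proof -
  define T where "T k x = coeff f k * (x^k * exp (-x) * x powr (\<alpha>-1) * bessel_K0 x)" for k x
  have expand: "(\<lambda>x. poly f x * exp (- x) * x powr (\<alpha> - 1) * bessel_K0 x) = (\<lambda>x. \<Sum>k\<le>degree f. T k x)"
    by (simp add: T_def poly_altdef sum_distrib_left sum_distrib_right mult_ac)
  have T_int: "set_integrable lborel {0<..} (T k)" for k
    unfolding T_def by (intro set_integrable_mult_right weighted_monomial_integral(1)[OF a])
  have T_integral: "(LBINT x:{0<..}. T k x)
      = coeff f k * (Gamma (\<alpha> + k) * 2 powr (-(\<alpha> + k)) * Beta (1/2) (\<alpha> + k))" for k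
    unfolding T_def by (simp add: set_integral_mult_right weighted_monomial_integral(2)[OF a])
  note sum = set_integrable_sum[of "{..degree f}", OF T_int]
  show "set_integrable lborel {0<..} (\<lambda>x. poly f x * exp (- x) * x powr (\<alpha> - 1) * bessel_K0 x)"
    unfolding expand by (rule sum(1))
  have "u0 \<alpha> f = (\<Sum>k\<le>degree f. coeff f k * u0_moment \<alpha> k)" by (simp add: u0_def)
  also have "\<dots> = u0_weight_constant \<alpha> * (\<Sum>k\<le>degree f. LBINT x:{0<..}. T k x)"
    by (simp add: T_integral u0_moment_eq_weighted_moment[OF a] sum_distrib_left mult_ac)
  finally show "u0 \<alpha> f = u0_weight_constant \<alpha> *
           (LBINT x:{0<..}. poly f x * exp (- x) * x powr (\<alpha> - 1) * bessel_K0 x)"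
    unfolding expand sum(2) .
qed

(* A nonnegative polynomial g \<noteq> 0 vanishes only at finitely many points, while the weight is
   positive on (0, oo); hence the integral representing u0 alpha g is positive. *)
lemma u0_positive_definite:
  fixes \<alpha> :: real
  assumes a: "\<alpha> > 0"
  shows "positive_definite_form (u0 \<alpha>)"
  unfolding positive_definite_form_def
proof (intro allI impI)
  fix g :: "real poly"
  assume g: "g \<noteq> 0 \<and> (\<forall>x. 0 \<le> poly g x)"
  define \<phi> where "\<phi> x = indicator {0<..} x * (poly g x * exp (- x) * x powr (\<alpha> - 1) * bessel_K0 x)"
    for x :: real
  have "integrable lborel \<phi>"
    using u0_integral_representation(1)[OF a, of g] by (simp add: set_integrable_def \<phi>_def[abs_def])
  moreover have "0 \<le> \<phi> x" for x
    using g bessel_K0_nonneg[of x] by (simp add: \<phi>_def indicator_def)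
  moreover have "countable {x. poly g x = 0}"
    using g poly_roots_finite countable_finite by blast
  moreover have "\<phi> x > 0" if "x \<in> {0<..<1} - {x. poly g x = 0}" for x
  proof -
    have "poly g x > 0" using that g by (auto simp: less_le)
    then show ?thesis using that bessel_K0_pos[of x] by (simp add: \<phi>_def)
  qed
  ultimately have "integral\<^sup>L lborel \<phi> > 0"
    by (intro integral_pos_if_pos_on_interval[of _ 0 1]) auto
  moreover have "u0 \<alpha> g = u0_weight_constant \<alpha> * integral\<^sup>L lborel \<phi>"
    using u0_integral_representation(2)[OF a, of g] by (simp add: set_lebesgue_integral_def \<phi>_def[abs_def])
  ultimately show "u0 \<alpha> g > 0"
    using u0_weight_constant_pos[OF a] by simp
qed


theorem lemma3p3:
  fixes \<alpha> :: real
  assumes "\<alpha> > 0"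
  shows "(\<forall>f :: real poly.
            set_integrable lborel {0<..}
              (\<lambda>x. poly f x * exp (- x) * x powr (\<alpha> - 1) * bessel_K0 x) \<and>
            u0 \<alpha> f = 2 powr \<alpha> * Gamma (\<alpha> + 1/2) / (sqrt pi * (Gamma \<alpha>)^2) *
              (LBINT x:{0<..}. poly f x * exp (- x) * x powr (\<alpha> - 1) * bessel_K0 x))
         \<and> positive_definite_form (u0 \<alpha>)
         \<and> regular_form (u0 \<alpha>)
         \<and> (\<exists>!Q. orthogonal_seq (u0 \<alpha>) Q \<and> (\<forall>n. lead_coeff (Q n) = 1))"
proof -
  have pd: "positive_definite_form (u0 \<alpha>)" by (rule u0_positive_definite[OF assms])
  show ?thesis
    using u0_integral_representation[OF assms] pd
      linear_poly_form.positive_definite_monic_ops[OF linear_poly_form_u0 pd]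
    unfolding u0_weight_constant_def by blast
qed

end
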